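(* For $\epsilon>0$ sufficiently small, the map $\{(\phi,\theta)\in S^2: y\neq 0\}\to S^2\times S^2\setminus\Delta$, $(\phi,\theta)\mapsto p_2(L_s(\phi,\theta))=(\hat a,-\hat b)$, is an immersion, where for $\theta\in(0,\pi)$ $$\hat a=(-\sin(\phi+\nu),-\cos(\phi+\nu),0),$$ $$\hat b=D^{-1}\Big(\cos^2\nu\cos^2\theta\sin(\phi+\nu)+\sin^2\theta\sin(\phi-\nu),\ \cos^2\nu\cos^2\theta\cos(\phi+\nu)+\sin^2\theta\cos(\phi-\nu),\ -\tfrac12\sin 2\nu\sin2\theta\Big),$$ and for $\theta\in(\pi,2\pi)$, $\hat a$ and the first two components of $\hat b$ are replaced by their negatives (the third component of $\hat b$ unchanged); here $\nu=\epsilon\sin\phi$ and $D=\cos^2\nu+\sin^2\nu\sin^2\theta$.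
   Context: $(\phi,\theta)$ are spherical-polar coordinates on $S^2$ with Cartesian coordinates $(x,y,z)=(\sin\phi\cos\theta,\sin\phi\sin\theta,\cos\phi)$, so $\{y\neq0\}=\{\phi\in(0,\pi),\theta\notin\{0,\pi\}\}$. $\Delta=\{(\hat r,\hat r)\}\subset S^2\times S^2$ is the diagonal. ($\hat a,\hat b$ are the unit vectors of the puncture holonomies $a=i\hat a\cdot\vec\sigma$, $b=i\hat b\cdot\vec\sigma$ of the normalized representative of the point $L_s(\phi,\theta)$ of the sphere Lagrangian in the traceless character variety of the twice-punctured torus, and $p_2$ is the homeomorphism $P_4\to S^2\times S^2\setminus\Delta$.) *)

theory Defs
  imports "HOL-Analysis.Analysis"
begin

type_synonym vec3 = "real \<times> real \<times> real"

definition nu :: "real \<Rightarrow> real \<Rightarrow> real" where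
  "nu eps phi = eps * sin phi"

definition Dden :: "real \<Rightarrow> real \<Rightarrow> real \<Rightarrow> real" where
  "Dden eps phi theta = (cos (nu eps phi))^2 + (sin (nu eps phi))^2 * (sin theta)^2"

definition sgnth :: "real \<Rightarrow> real" where
  "sgnth theta = (if theta < pi then 1 else -1)"

definition ahat :: "real \<Rightarrow> real \<Rightarrow> real \<Rightarrow> vec3" where
  "ahat eps phi theta =
     (let v = nu eps phi; s = sgnth theta in
      (s * (- sin (phi + v)), s * (- cos (phi + v)), 0))"

definition bhat :: "real \<Rightarrow> real \<Rightarrow> real \<Rightarrow> vec3" where
  "bhat eps phi theta =
     (let v = nu eps phi; s = sgnth theta; d = Dden eps phi theta in
      (s * ((cos v)^2 * (cos theta)^2 * sin (phi + v) + (sin theta)^2 * sin (phi - v)) / d,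
       s * ((cos v)^2 * (cos theta)^2 * cos (phi + v) + (sin theta)^2 * cos (phi - v)) / d,
       (- (1/2) * sin (2 * v) * sin (2 * theta)) / d))"

definition p2Ls :: "real \<Rightarrow> real \<times> real \<Rightarrow> vec3 \<times> vec3" where
  "p2Ls eps x = (ahat eps (fst x) (snd x), - bhat eps (fst x) (snd x))"

text \<open>Domain \<open>{y \<noteq> 0}\<close> in spherical coordinates.\<close>
definition ydom :: "(real \<times> real) set" where
  "ydom = {(phi, theta). 0 < phi \<and> phi < pi \<and> 0 < theta \<and> theta < 2 * pi \<and> theta \<noteq> pi}"

definition immersion_on :: "('a::real_normed_vector \<Rightarrow> 'b::real_normed_vector) \<Rightarrow> 'a set \<Rightarrow> bool" where
  "immersion_on f S \<longleftrightarrow> (\<forall>x\<in>S. \<exists>f'. (f has_derivative f') (at x) \<and> inj f')"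

end

theory Submission
  imports Defs
begin

(*
  Away from theta = pi the sign sgnth theta is locally constant, so near each point of ydom the
  map p2Ls agrees with a smooth branch.  Its differential is triangular: ahat depends on phi only,
  and d/dphi ahat = +-(1 + eps cos phi) (-cos (phi + nu), sin (phi + nu), 0) is nonzero for eps < 1,
  so injectivity reduces to d/dtheta bhat being nonzero.  Writing cos^2 theta = 1 - sin^2 theta, the
  y-component of bhat is a Moebius function of sin^2 theta, whence
    d/dtheta bhat_y = +-cos^2 nu (cos (phi - nu) - cos (phi + nu)) sin (2 theta) / D^2
                    = +-2 cos^2 nu sin phi sin nu sin (2 theta) / D^2,
  which vanishes only where cos theta = 0; there d/dtheta bhat_z = +-sin (2 nu) is nonzero.
*)

lemma linear_plane_decomp:
  fixes L :: "real \<times> real \<Rightarrow> 'a::real_vector"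
  assumes "linear L"
  shows "L h = fst h *\<^sub>R L (1,0) + snd h *\<^sub>R L (0,1)"
proof -
  have "h = fst h *\<^sub>R (1,0) + snd h *\<^sub>R (0,1)" by (cases h) simp
  then have "L h = L (fst h *\<^sub>R (1,0) + snd h *\<^sub>R (0,1))" by (rule arg_cong)
  also have "\<dots> = fst h *\<^sub>R L (1,0) + snd h *\<^sub>R L (0,1)"
    by (simp only: linear_add[OF assms] linear_scale[OF assms])
  finally show ?thesis .
qed

lemma inj_linear_plane_triangular:
  fixes L :: "real \<times> real \<Rightarrow> 'a::real_vector" and P :: "'a \<Rightarrow> 'b::real_vector"
  assumes L: "linear L" and P: "linear P"
    and "P (L (0,1)) = 0" "P (L (1,0)) \<noteq> 0" "L (0,1) \<noteq> 0"
  shows "inj L"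
  unfolding linear_inj_iff_eq_0[OF L]
proof (intro allI impI)
  fix h assume h: "L h = 0"
  have "P (L h) = fst h *\<^sub>R P (L (1,0)) + snd h *\<^sub>R P (L (0,1))"
    by (subst linear_plane_decomp[OF L]) (simp only: linear_add[OF P] linear_scale[OF P])
  then have "fst h *\<^sub>R P (L (1,0)) = 0"
    using h assms(3) linear_0[OF P] by simp
  then have "fst h = 0" using assms(4) by simp
  then have "snd h = 0" using h linear_plane_decomp[OF L, of h] assms(5) by simp
  with \<open>fst h = 0\<close> show "h = 0" by (simp add: prod_eq_iff)
qed

lemma has_vector_derivative_partial_fst:
  fixes F :: "real \<times> real \<Rightarrow> 'a::real_normed_vector"
  assumes "(F has_derivative F') (at (a,b))"
  shows "((\<lambda>t. F (t,b)) has_vector_derivative F' (1,0)) (at a)"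
proof -
  have "((\<lambda>t. (t,b)) has_derivative (\<lambda>t. t *\<^sub>R (1,0))) (at a)"
    by (auto intro!: derivative_eq_intros)
  from has_derivative_compose[OF this assms] show ?thesis
    unfolding has_vector_derivative_def linear_scale[OF has_derivative_linear[OF assms]] .
qed

lemma has_vector_derivative_partial_snd:
  fixes F :: "real \<times> real \<Rightarrow> 'a::real_normed_vector"
  assumes "(F has_derivative F') (at (a,b))"
  shows "((\<lambda>t. F (a,t)) has_vector_derivative F' (0,1)) (at b)"
proof -
  have "((\<lambda>t. (a,t)) has_derivative (\<lambda>t. t *\<^sub>R (0,1))) (at b)"
    by (auto intro!: derivative_eq_intros)
  from has_derivative_compose[OF this assms] show ?thesis
    unfolding has_vector_derivative_def linear_scale[OF has_derivative_linear[OF assms]] .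
qed

lemma sin_sq_moebius_has_derivative:
  fixes c q A B t :: real
  assumes "c + q = 1" "c + q * (sin t)^2 \<noteq> 0"
  shows "((\<lambda>t. (c * (cos t)^2 * A + (sin t)^2 * B) / (c + q * (sin t)^2)) has_real_derivative
          c * (B - A) * sin (2 * t) / (c + q * (sin t)^2)^2) (at t)"
proof -
  have N: "((\<lambda>t. c * (cos t)^2 * A + (sin t)^2 * B) has_real_derivative
      c * (2 * cos t * - sin t) * A + 2 * sin t * cos t * B) (at t)"
    by (auto intro!: derivative_eq_intros)
  have D: "((\<lambda>t. c + q * (sin t)^2) has_real_derivative q * (2 * sin t * cos t)) (at t)"
    by (auto intro!: derivative_eq_intros)
  have num: "(c * (2 * cos t * - sin t) * A + 2 * sin t * cos t * B) * (c + q * (sin t)^2)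
      - (c * (cos t)^2 * A + (sin t)^2 * B) * (q * (2 * sin t * cos t))
      = c * (B - A) * sin (2 * t)"
  proof -
    have q: "q = 1 - c" using assms(1) by simp
    show ?thesis
      unfolding sin_double cos_squared_eq q by (simp add: algebra_simps power2_eq_square)
  qed
  show ?thesis
    using DERIV_divide[OF N D assms(2)] by (rule DERIV_cong) (simp only: num, simp add: power2_eq_square)
qed

lemma sin_double_over_sin_sq_has_derivative:
  fixes c q K t :: real
  assumes "c + q = 1" "cos t = 0"
  shows "((\<lambda>t. K * sin (2 * t) / (2 * (c + q * (sin t)^2))) has_real_derivative - K) (at t)"
proof -
  have s2: "(sin t)^2 = 1" using sin_cos_squared_add[of t] assms(2) by simp
  have c2: "cos (2 * t) = -1" using s2 assms(2) by (simp add: cos_double)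
  have s2t: "sin (2 * t) = 0" using assms(2) by (simp add: sin_double)
  have "2 * c + 2 * q = 2" using assms(1) by simp
  then show ?thesis
    by (auto intro!: derivative_eq_intros simp: s2 c2 s2t)
qed

lemma cos_nu_pos:
  assumes "\<bar>eps\<bar> < pi / 2"
  shows "0 < cos (nu eps phi)"
proof -
  have "\<bar>nu eps phi\<bar> \<le> \<bar>eps\<bar>"
    using abs_sin_le_one[of phi] by (simp add: nu_def abs_mult mult_left_le)
  then show ?thesis using assms by (intro cos_gt_zero_pi) auto
qed

lemma Dden_pos:
  assumes "\<bar>eps\<bar> < pi / 2"
  shows "0 < Dden eps phi theta"
  using cos_nu_pos[OF assms, of phi] by (simp add: Dden_def add_pos_nonneg)

lemma nu_bounds:
  assumes "0 < eps" "eps < 1" "0 < phi" "phi < pi"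
  shows "0 < nu eps phi" "nu eps phi < 1"
proof -
  have "nu eps phi \<le> eps" using assms(1) by (simp add: nu_def mult_left_le)
  then show "nu eps phi < 1" using assms(2) by linarith
  show "0 < nu eps phi" using assms sin_gt_zero[of phi] by (simp add: nu_def)
qed

(* p2Ls with the sign sgnth theta frozen to s; the second component is already -bhat. *)
definition p2Ls_branch :: "real \<Rightarrow> real \<Rightarrow> real \<times> real \<Rightarrow> vec3 \<times> vec3" where
  "p2Ls_branch s eps x =
     (let phi = fst x; theta = snd x; v = nu eps phi; d = Dden eps phi theta in
      ((- s * sin (phi + v), - s * cos (phi + v), 0),
       (- s * ((cos v)^2 * (cos theta)^2 * sin (phi + v) + (sin theta)^2 * sin (phi - v)) / d,
        - s * ((cos v)^2 * (cos theta)^2 * cos (phi + v) + (sin theta)^2 * cos (phi - v)) / d,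
        sin (2 * v) * sin (2 * theta) / (2 * d))))"

lemma p2Ls_eq_branch: "p2Ls eps (phi, theta) = p2Ls_branch (sgnth theta) eps (phi, theta)"
  by (simp add: p2Ls_def p2Ls_branch_def ahat_def bhat_def Let_def)

lemma p2Ls_eq_branch_nearby:
  assumes "theta \<noteq> pi"
  obtains U where "open U" "(phi, theta) \<in> U" "\<forall>y\<in>U. p2Ls eps y = p2Ls_branch (sgnth theta) eps y"
proof
  let ?U = "if theta < pi then {y :: real \<times> real. snd y < pi} else {y. pi < snd y}"
  show "open ?U"
  proof -
    have snd: "continuous_on UNIV (\<lambda>y::real \<times> real. snd y)"
      by (intro continuous_intros)
    show ?thesis
      using open_Collect_less[OF snd continuous_on_const] open_Collect_less[OF continuous_on_const snd]
      by simp
  qed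
  show "(phi, theta) \<in> ?U" using assms by auto
  show "\<forall>y\<in>?U. p2Ls eps y = p2Ls_branch (sgnth theta) eps y"
  proof
    fix y assume "y \<in> ?U"
    then have "sgnth (snd y) = sgnth theta"
      using assms by (auto simp: sgnth_def split: if_split_asm)
    then show "p2Ls eps y = p2Ls_branch (sgnth theta) eps y"
      using p2Ls_eq_branch[of eps "fst y" "snd y"] by simp
  qed
qed

lemma p2Ls_branch_differentiable:
  assumes "Dden eps (fst x) (snd x) \<noteq> 0"
  shows "p2Ls_branch s eps differentiable (at x)"
  unfolding p2Ls_branch_def Let_def nu_def Dden_def differentiable_def
  using assms[unfolded Dden_def nu_def]
  by (intro exI) (rule derivative_intros | simp)+

lemma fst_p2Ls_branch:
  "fst (p2Ls_branch s eps x) = (- s * sin (fst x + nu eps (fst x)), - s * cos (fst x + nu eps (fst x)), 0)"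
  by (simp add: p2Ls_branch_def Let_def)

lemma p2Ls_branch_ahat_phi_derivative:
  "((\<lambda>t. fst (p2Ls_branch s eps (t, theta))) has_vector_derivative
     (- s * cos (phi + nu eps phi) * (1 + eps * cos phi), s * sin (phi + nu eps phi) * (1 + eps * cos phi), 0))
   (at phi)"
  unfolding fst_p2Ls_branch fst_conv nu_def
  by (intro has_vector_derivative_Pair has_vector_derivative_const)
     (auto intro!: derivative_eq_intros simp flip: has_real_derivative_iff_has_vector_derivative)

lemma p2Ls_branch_bhat_y_theta_derivative:
  fixes eps phi theta s :: real
  defines "v \<equiv> nu eps phi"
  assumes "Dden eps phi theta \<noteq> 0"
  shows "((\<lambda>t. fst (snd (snd (p2Ls_branch s eps (phi, t))))) has_real_derivative
     - s * ((cos v)^2 * (cos (phi - v) - cos (phi + v)) * sin (2 * theta) / (Dden eps phi theta)^2))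
   (at theta)"
proof -
  have "(\<lambda>t. fst (snd (snd (p2Ls_branch s eps (phi, t))))) = (\<lambda>t. - s *
      (((cos v)^2 * (cos t)^2 * cos (phi + v) + (sin t)^2 * cos (phi - v)) / ((cos v)^2 + (sin v)^2 * (sin t)^2)))"
    by (simp add: p2Ls_branch_def Let_def Dden_def v_def)
  moreover have "(cos v)^2 + (sin v)^2 * (sin theta)^2 = Dden eps phi theta"
    by (simp add: Dden_def v_def)
  ultimately show ?thesis
    using DERIV_cmult[OF sin_sq_moebius_has_derivative[of "(cos v)^2" "(sin v)^2" theta "cos (phi + v)" "cos (phi - v)"], of "- s"]
      assms(2) by simp
qed

lemma p2Ls_branch_bhat_z_theta_derivative:
  assumes "cos theta = 0"
  shows "((\<lambda>t. snd (snd (snd (p2Ls_branch s eps (phi, t))))) has_real_derivative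
     - sin (2 * nu eps phi)) (at theta)"
proof -
  have eq: "(\<lambda>t. snd (snd (snd (p2Ls_branch s eps (phi, t))))) = (\<lambda>t. sin (2 * nu eps phi) * sin (2 * t) /
      (2 * ((cos (nu eps phi))^2 + (sin (nu eps phi))^2 * (sin t)^2)))"
    by (simp add: p2Ls_branch_def Let_def Dden_def)
  show ?thesis
    unfolding eq by (rule sin_double_over_sin_sq_has_derivative) (simp_all add: assms)
qed

lemma p2Ls_branch_theta_not_stationary:
  assumes "0 < eps" "eps < 1" "0 < phi" "phi < pi" "sin theta \<noteq> 0" "s \<noteq> 0"
  shows "\<not> ((\<lambda>t. p2Ls_branch s eps (phi, t)) has_vector_derivative 0) (at theta)"
proof
  define v where "v = nu eps phi"
  assume stationary: "((\<lambda>t. p2Ls_branch s eps (phi, t)) has_vector_derivative 0) (at theta)"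
  have component_stationary: "((\<lambda>t. f (p2Ls_branch s eps (phi, t))) has_real_derivative 0) (at theta)"
    if "bounded_linear f" for f :: "vec3 \<times> vec3 \<Rightarrow> real"
    using bounded_linear.has_vector_derivative[OF that stationary] linear_0[OF bounded_linear.linear[OF that]]
    by (simp add: has_real_derivative_iff_has_vector_derivative)
  have v_bounds: "0 < v" "v < 1" using nu_bounds[OF assms(1-4)] by (simp_all add: v_def)
  show False
  proof (cases "cos theta = 0")
    case True
    have bhat_z: "((\<lambda>t. snd (snd (snd (p2Ls_branch s eps (phi, t))))) has_real_derivative - sin (2 * v)) (at theta)"
      using p2Ls_branch_bhat_z_theta_derivative[OF True] unfolding v_def .
    have "sin (2 * v) \<noteq> 0"
      using v_bounds pi_gt3 by (intro sin_gt_zero[THEN less_imp_neq, THEN not_sym]) auto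
    moreover have "- sin (2 * v) = 0"
      using DERIV_unique[OF bhat_z component_stationary[OF bounded_linear_compose[OF bounded_linear_snd
            bounded_linear_compose[OF bounded_linear_snd bounded_linear_snd]]]] .
    ultimately show False by simp
  next
    case False
    have D: "Dden eps phi theta \<noteq> 0" using assms pi_gt3 Dden_pos[of eps phi theta] by auto
    have bhat_y: "((\<lambda>t. fst (snd (snd (p2Ls_branch s eps (phi, t))))) has_real_derivative
        - s * ((cos v)^2 * (cos (phi - v) - cos (phi + v)) * sin (2 * theta) / (Dden eps phi theta)^2))
        (at theta)"
      using p2Ls_branch_bhat_y_theta_derivative[OF D] unfolding v_def .
    have "cos (phi - v) - cos (phi + v) = 2 * sin phi * sin v"
      by (simp add: cos_diff cos_add)
    moreover have "sin phi \<noteq> 0" "sin v \<noteq> 0" "cos v \<noteq> 0"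
      using assms v_bounds pi_gt3 sin_gt_zero[of phi] sin_gt_zero[of v] cos_gt_zero_pi[of v] by auto
    moreover have "sin (2 * theta) \<noteq> 0" using assms False by (simp add: sin_double)
    ultimately have "(cos v)^2 * (cos (phi - v) - cos (phi + v)) * sin (2 * theta) / (Dden eps phi theta)^2 \<noteq> 0"
      using D by simp
    moreover have "- s * ((cos v)^2 * (cos (phi - v) - cos (phi + v)) * sin (2 * theta) / (Dden eps phi theta)^2) = 0"
      using DERIV_unique[OF bhat_y component_stationary[OF bounded_linear_compose[OF bounded_linear_fst
            bounded_linear_compose[OF bounded_linear_snd bounded_linear_snd]]]] .
    ultimately show False using assms(6) by simp
  qed
qed

lemma p2Ls_branch_injective_derivative:
  assumes "0 < eps" "eps < 1" "0 < phi" "phi < pi" "sin theta \<noteq> 0" "s \<noteq> 0"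
    and F': "(p2Ls_branch s eps has_derivative F') (at (phi, theta))"
  shows "inj F'"
proof (rule inj_linear_plane_triangular[where P = fst])
  show "linear F'" using F' by (rule has_derivative_linear)
  show "linear fst" by (rule linear_fst)
  have "((\<lambda>t. fst (p2Ls_branch s eps (phi, t))) has_vector_derivative fst (F' (0,1))) (at theta)"
    using bounded_linear.has_vector_derivative[OF bounded_linear_fst has_vector_derivative_partial_snd[OF F']] .
  moreover have "((\<lambda>t. fst (p2Ls_branch s eps (phi, t))) has_vector_derivative 0) (at theta)"
    unfolding fst_p2Ls_branch fst_conv by (rule has_vector_derivative_const)
  ultimately show "fst (F' (0,1)) = 0"
    by (rule vector_derivative_unique_at)
  have "((\<lambda>t. fst (p2Ls_branch s eps (t, theta))) has_vector_derivative fst (F' (1,0))) (at phi)"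
    using bounded_linear.has_vector_derivative[OF bounded_linear_fst has_vector_derivative_partial_fst[OF F']] .
  then have a_phi: "fst (F' (1,0)) =
      (- s * cos (phi + nu eps phi) * (1 + eps * cos phi), s * sin (phi + nu eps phi) * (1 + eps * cos phi), 0)"
    using p2Ls_branch_ahat_phi_derivative by (rule vector_derivative_unique_at)
  have "1 + eps * cos phi \<noteq> 0"
  proof -
    have "\<bar>eps * cos phi\<bar> \<le> eps" using assms(1) by (simp add: abs_mult mult_left_le)
    then show ?thesis using assms(2) by linarith
  qed
  then have "fst (F' (1,0)) = 0 \<Longrightarrow> cos (phi + nu eps phi) = 0 \<and> sin (phi + nu eps phi) = 0"
    using a_phi assms(6) by (simp add: zero_prod_def)
  moreover have "\<not> (cos (phi + nu eps phi) = 0 \<and> sin (phi + nu eps phi) = 0)"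
    using sin_cos_squared_add[of "phi + nu eps phi"] by (auto simp del: sin_cos_squared_add)
  ultimately show "fst (F' (1,0)) \<noteq> 0" by blast
  show "F' (0,1) \<noteq> 0"
    using has_vector_derivative_partial_snd[OF F'] p2Ls_branch_theta_not_stationary[OF assms(1-6)] by auto
qed

lemma p2Ls_has_injective_derivative:
  assumes eps: "0 < eps" "eps < 1" and "(phi, theta) \<in> ydom"
  shows "\<exists>F'. (p2Ls eps has_derivative F') (at (phi, theta)) \<and> inj F'"
proof -
  have phi: "0 < phi" "phi < pi" and theta: "0 < theta" "theta < 2 * pi" "theta \<noteq> pi"
    using assms(3) by (auto simp: ydom_def)
  have sin_theta: "sin theta \<noteq> 0"
    using theta sin_gt_zero[of theta] sin_lt_zero[of theta] by (cases "theta < pi") auto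
  have sign: "sgnth theta \<noteq> 0" by (simp add: sgnth_def)
  have "Dden eps phi theta \<noteq> 0"
    using Dden_pos[of eps phi theta] eps pi_gt3 by simp
  then obtain F' where F': "(p2Ls_branch (sgnth theta) eps has_derivative F') (at (phi, theta))"
    using p2Ls_branch_differentiable[of eps "(phi, theta)"] unfolding differentiable_def by auto
  obtain U where "open U" "(phi, theta) \<in> U" and U: "\<forall>y\<in>U. p2Ls eps y = p2Ls_branch (sgnth theta) eps y"
    using p2Ls_eq_branch_nearby[OF theta(3)] by blast
  have "(p2Ls eps has_derivative F') (at (phi, theta))"
    using has_derivative_transform_within_open[OF F' \<open>open U\<close> \<open>(phi, theta) \<in> U\<close>] U by simp
  moreover have "inj F'"
    using p2Ls_branch_injective_derivative[OF eps phi sin_theta sign F'] .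
  ultimately show ?thesis by blast
qed

theorem mainTheorem11:
  shows "\<exists>eps0 > 0. \<forall>eps. 0 < eps \<and> eps < eps0 \<longrightarrow> immersion_on (p2Ls eps) ydom"
proof (intro exI[of _ 1] conjI allI impI)
  fix eps :: real
  assume "0 < eps \<and> eps < 1"
  then show "immersion_on (p2Ls eps) ydom"
    unfolding immersion_on_def using p2Ls_has_injective_derivative by force
qed simp

end
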